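(* Let $p\in(1,2]$ and $\delta\ge1$. Then for all $a,b,c,d\in\mathbb R$ and all $e,f\ge0$, $$\big(V_{p-1}(a-b)-V_{p-1}(c-d)\big)\big(V_\delta(a-c)e^p-V_\delta(b-d)f^p\big)$$ $$\ge\tfrac{p-1}{2^{\delta+1}}\big(|a-b|+|c-d|\big)^{p-2}\big(|a-c|+|b-d|\big)^{\delta-1}\big|(a-c)-(b-d)\big|^2(e^p+f^p)-\Big(\tfrac{2^{\delta+1}}{p-1}\Big)^{p-1}\big(|a-c|+|b-d|\big)^{p+\delta-1}|e-f|^p.$$
   Context: For $\gamma>0$ and $a\in\mathbb R$, $V_\gamma(a):=|a|^{\gamma-1}a$, with $V_\gamma(0):=0$. Expressions of the form $0^{p-2}\cdot 0$ (when $|a-b|+|c-d|=0$) are interpreted as $0$. *)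

theory Defs
  imports Complex_Main
begin

definition V :: "real \<Rightarrow> real \<Rightarrow> real" where
  "V \<gamma> a = (if a = 0 then 0 else \<bar>a\<bar> powr (\<gamma> - 1) * a)"

end

theory Submission
  imports Defs "HOL-Analysis.Analysis"
begin

(*
  Put q = p - 1 and h = (a - c) - (b - d) = (a - b) - (c - d). Both differences
  V_q(a - b) - V_q(c - d) and V_\<delta>(a - c) - V_\<delta>(b - d) have the sign of h; the first
  lies between q T^(q-1) |h| and 2^(1-q) |h|^q with T = |a - b| + |c - d|, the second is at
  least 2^(1-\<delta>) S^(\<delta>-1) |h| with S = |a - c| + |b - d|, and |V_\<delta>(a - c) + V_\<delta>(b - d)| <= S^\<delta>.
  Polarising u e^p - v f^p = ((u - v)(e^p + f^p) + (u + v)(e^p - f^p)) / 2, the symmetric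
  part yields twice the main term. Half of it absorbs the antisymmetric part up to a
  remainder which, after |e^p - f^p| <= p max(e,f)^q |e - f|, has the form t^q (\<alpha> - \<beta> t)
  in t = |h|; its maximum, found with a tangent line of the concave t^q, is the error term.
*)

lemma powr_le_tangent_line:
  fixes q c t :: real
  assumes "0 < q" "q \<le> 1" "0 < c" "0 \<le> t"
  shows "t powr q \<le> c powr q + q * c powr (q - 1) * (t - c)"
proof (cases "t = 0")
  case True
  have "c powr (q - 1) * c = c powr q"
    using assms by (simp add: powr_diff)
  then show ?thesis
    using True assms by (simp add: algebra_simps)
next
  case False
  have young: "t powr q * c powr (1 - q) \<le> q * t + (1 - q) * c"
    using Youngs_inequality_0[of q "1 - q" t c] assms False by simp
  have "t powr q = t powr q * c powr (1 - q) * c powr (q - 1)"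
    using assms by (simp flip: powr_add)
  also have "\<dots> \<le> (q * t + (1 - q) * c) * c powr (q - 1)"
    using young by (simp add: mult_right_mono)
  also have "\<dots> = c powr q + q * c powr (q - 1) * (t - c)"
    using powr_mult_base[of c "q - 1"] assms by (simp add: algebra_simps)
  finally show ?thesis .
qed

lemma tangent_line_le_powr:
  fixes d c x :: real
  assumes "1 \<le> d" "0 < c" "0 \<le> x"
  shows "c powr d + d * c powr (d - 1) * (x - c) \<le> x powr d"
proof (cases "x = 0")
  case True
  have "c powr (d - 1) * c = c powr d"
    using assms by (simp add: powr_diff)
  then show ?thesis
    using True assms by (simp add: algebra_simps)
next
  case False
  have young: "x * c powr (d - 1) \<le> (1/d) * x powr d + (1 - 1/d) * c powr d"
    using Youngs_inequality_0[of "1/d" "1 - 1/d" "x powr d" "c powr d"] assms False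
    by (simp add: powr_powr algebra_simps)
  have "d * (x * c powr (d - 1)) \<le> x powr d + (d - 1) * c powr d"
    using mult_left_mono[OF young, of d] assms by (simp add: algebra_simps)
  then show ?thesis
    using powr_mult_base[of c "d - 1"] assms by (simp add: algebra_simps)
qed

lemma mult_powr_le_powr:
  fixes q x s :: real
  assumes "q \<le> 1" "0 \<le> x" "x \<le> s"
  shows "x * s powr (q - 1) \<le> x powr q"
proof (cases "x = 0")
  case False
  then have "x * s powr (q - 1) \<le> x * x powr (q - 1)"
    using powr_mono2'[of "q - 1" x s] assms by (simp add: mult_left_mono)
  then show ?thesis
    using powr_mult_base[of x "q - 1"] assms by simp
qed simp

lemma powr_le_mult_powr:
  fixes d x s :: real
  assumes "1 \<le> d" "0 \<le> x" "x \<le> s"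
  shows "x powr d \<le> x * s powr (d - 1)"
proof -
  have "x * x powr (d - 1) \<le> x * s powr (d - 1)"
    using powr_mono2[of "d - 1" x s] assms by (simp add: mult_left_mono)
  then show ?thesis
    using powr_mult_base[of x "d - 1"] assms by simp
qed

lemma powr_add_le_add_powr:
  fixes q x y :: real
  assumes "q \<le> 1" "0 \<le> x" "0 \<le> y"
  shows "(x + y) powr q \<le> x powr q + y powr q"
proof -
  have "(x + y) * (x + y) powr (q - 1) = (x + y) powr q"
    using powr_mult_base[of "x + y" "q - 1"] assms by simp
  moreover have "x * (x + y) powr (q - 1) \<le> x powr q" "y * (x + y) powr (q - 1) \<le> y powr q"
    using mult_powr_le_powr assms by simp_all
  ultimately show ?thesis
    by (simp add: algebra_simps)
qed

lemma add_powr_le_powr_add: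
  fixes d x y :: real
  assumes "1 \<le> d" "0 \<le> x" "0 \<le> y"
  shows "x powr d + y powr d \<le> (x + y) powr d"
proof -
  have "(x + y) * (x + y) powr (d - 1) = (x + y) powr d"
    using powr_mult_base[of "x + y" "d - 1"] assms by simp
  moreover have "x powr d \<le> x * (x + y) powr (d - 1)" "y powr d \<le> y * (x + y) powr (d - 1)"
    using powr_le_mult_powr assms by simp_all
  ultimately show ?thesis
    by (simp add: algebra_simps)
qed

lemma add_powr_le_midpoint:
  fixes q x y :: real
  assumes "0 < q" "q \<le> 1" "0 \<le> x" "0 \<le> y"
  shows "x powr q + y powr q \<le> 2 powr (1 - q) * (x + y) powr q"
proof (cases "x + y = 0")
  case False
  define c where "c = (x + y) / 2"
  have "c > 0"
    using False assms by (simp add: c_def)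
  then have "x powr q + y powr q \<le> 2 * c powr q + q * c powr (q - 1) * ((x - c) + (y - c))"
    using powr_le_tangent_line[of q c x] powr_le_tangent_line[of q c y] assms
    by (simp add: algebra_simps)
  also have "\<dots> = 2 powr (1 - q) * (x + y) powr q"
    by (simp add: c_def powr_divide powr_diff)
  finally show ?thesis .
qed (use assms in \<open>simp add: add_nonneg_eq_0_iff\<close>)

lemma midpoint_le_add_powr:
  fixes d x y :: real
  assumes "1 \<le> d" "0 \<le> x" "0 \<le> y"
  shows "2 powr (1 - d) * (x + y) powr d \<le> x powr d + y powr d"
proof (cases "x + y = 0")
  case False
  define c where "c = (x + y) / 2"
  have "c > 0"
    using False assms by (simp add: c_def)
  have "2 powr (1 - d) * (x + y) powr d = 2 * c powr d + d * c powr (d - 1) * ((x - c) + (y - c))"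
    by (simp add: c_def powr_divide powr_diff)
  also have "\<dots> \<le> x powr d + y powr d"
    using tangent_line_le_powr[of d c x] tangent_line_le_powr[of d c y] \<open>c > 0\<close> assms
    by (simp add: algebra_simps)
  finally show ?thesis .
qed (use assms in simp)

lemma abs_powr_diff_le:
  fixes p e f :: real
  assumes "1 \<le> p" "0 \<le> e" "0 \<le> f"
  shows "\<bar>e powr p - f powr p\<bar> \<le> p * max e f powr (p - 1) * \<bar>e - f\<bar>"
proof -
  have ordered: "x powr p - y powr p \<le> p * x powr (p - 1) * (x - y)" if "0 \<le> y" "y \<le> x" for x y
    using tangent_line_le_powr[of p x y] assms that by (cases "x = 0") (auto simp: algebra_simps)
  show ?thesis
  proof (cases "f \<le> e")
    case True
    then show ?thesis
      using ordered[of f e] powr_mono2[of p f e] assms by (simp add: max_def)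
  next
    case False
    then show ?thesis
      using ordered[of e f] powr_mono2[of p e f] assms by (simp add: max_def abs_minus_commute)
  qed
qed

lemma powr_mult_linear_le:
  fixes q \<alpha> \<beta> t :: real
  assumes "0 < q" "q \<le> 1" "0 < \<alpha>" "0 < \<beta>" "0 \<le> t"
  shows "t powr q * (\<alpha> - \<beta> * t) \<le> (q * \<alpha> / ((q + 1) * \<beta>)) powr q * \<alpha> / (q + 1)"
proof (cases "\<beta> * t \<le> \<alpha>")
  case True
  define c where "c = q * \<alpha> / ((q + 1) * \<beta>)"
  have "c > 0"
    using assms by (simp add: c_def)
  have cq: "c powr q = c * c powr (q - 1)"
    using powr_mult_base[of c "q - 1"] \<open>c > 0\<close> by simp
  have quadratic: "(c + q * (t - c)) * (\<alpha> - \<beta> * t) = c * \<alpha> / (q + 1) - q * \<beta> * (t - c)\<^sup>2"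
  proof -
    have \<alpha>_eq: "\<alpha> = (q + 1) * \<beta> * c / q"
      using assms unfolding c_def by simp
    have "q * (q + 1) \<noteq> 0"
      using assms by simp
    then show ?thesis
      using assms unfolding \<alpha>_eq by (simp add: field_simps power2_eq_square)
  qed
  have "t powr q * (\<alpha> - \<beta> * t) \<le> (c powr q + q * c powr (q - 1) * (t - c)) * (\<alpha> - \<beta> * t)"
    using powr_le_tangent_line[of q c t] \<open>c > 0\<close> True assms by (simp add: mult_right_mono)
  also have "\<dots> = c powr (q - 1) * (c * \<alpha> / (q + 1) - q * \<beta> * (t - c)\<^sup>2)"
    unfolding cq quadratic[symmetric] by (simp add: algebra_simps)
  also have "\<dots> \<le> c powr (q - 1) * (c * \<alpha> / (q + 1))"
    using assms by (intro mult_left_mono) auto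
  also have "\<dots> = c powr q * \<alpha> / (q + 1)"
    unfolding cq by simp
  finally show ?thesis
    by (simp add: c_def)
next
  case False
  then have "t powr q * (\<alpha> - \<beta> * t) \<le> 0"
    by (simp add: mult_nonneg_nonpos)
  also have "0 \<le> (q * \<alpha> / ((q + 1) * \<beta>)) powr q * \<alpha> / (q + 1)"
    using assms by simp
  finally show ?thesis .
qed

lemma V_nonneg: "0 \<le> a \<Longrightarrow> V g a = a powr g"
  using powr_mult_base[of a "g - 1"] by (simp add: V_def mult.commute)

lemma V_minus: "V g (- a) = - V g a"
  by (simp add: V_def)

lemma abs_V: "\<bar>V g a\<bar> = \<bar>a\<bar> powr g"
  using V_nonneg[of "\<bar>a\<bar>" g] V_minus[of g "\<bar>a\<bar>"] by (cases "0 \<le> a") auto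

lemma V_mono:
  assumes "0 < g" "a \<le> b"
  shows "V g a \<le> V g b"
proof -
  have nonneg: "V g x \<le> V g y" if "0 \<le> x" "x \<le> y" for x y
    using powr_mono2[of g x y] assms that by (simp add: V_nonneg)
  consider "0 \<le> a" | "b \<le> 0" | "a < 0" "0 < b"
    by linarith
  then show ?thesis
  proof cases
    case 2
    then show ?thesis
      using nonneg[of "- b" "- a"] assms by (simp add: V_minus)
  next
    case 3
    then show ?thesis
      using V_nonneg[of "- a" g] V_nonneg[of b g] V_minus[of g a]
        powr_ge_zero[of "- a" g] powr_ge_zero[of b g] by linarith
  qed (use nonneg assms in auto)
qed

lemma ordered_pair_sign_cases [consumes 1, case_names nonneg straddle reflect]:
  fixes A B :: real
  assumes "B \<le> A"
    and nonneg: "\<And>A B. 0 \<le> B \<Longrightarrow> B \<le> A \<Longrightarrow> P A B"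
    and straddle: "\<And>A B. B < 0 \<Longrightarrow> 0 < A \<Longrightarrow> P A B"
    and reflect: "\<And>A B. P (- B) (- A) \<Longrightarrow> P A B"
  shows "P A B"
proof -
  consider "0 \<le> B" | "A \<le> 0" | "B < 0" "0 < A"
    by linarith
  then show ?thesis
    by cases (use assms in \<open>auto intro: reflect nonneg\<close>)
qed

lemma V_diff_ge_concave:
  fixes q A B :: real
  assumes "0 < q" "q \<le> 1" "B \<le> A"
  shows "q * (\<bar>A\<bar> + \<bar>B\<bar>) powr (q - 1) * (A - B) \<le> V q A - V q B"
  using \<open>B \<le> A\<close>
proof (induct A B rule: ordered_pair_sign_cases)
  case (nonneg A B)
  show ?case
  proof (cases "A = B")
    case False
    then have "A > 0"
      using nonneg by simp
    have "q * (A + B) powr (q - 1) * (A - B) \<le> q * A powr (q - 1) * (A - B)"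
      using powr_mono2'[of "q - 1" A "A + B"] \<open>A > 0\<close> nonneg assms
      by (intro mult_right_mono mult_left_mono) auto
    also have "\<dots> \<le> A powr q - B powr q"
      using powr_le_tangent_line[of q A B] \<open>A > 0\<close> nonneg assms by (simp add: algebra_simps)
    finally show ?thesis
      using nonneg by (simp add: V_nonneg)
  qed simp
next
  case (straddle A B)
  have "q * (A - B) powr (q - 1) * (A - B) \<le> (A - B) powr (q - 1) * (A - B)"
    using straddle assms by (intro mult_right_mono) auto
  also have "\<dots> = (A + - B) powr q"
    using powr_mult_base[of "A - B" "q - 1"] straddle by (simp add: mult.commute)
  also have "\<dots> \<le> A powr q + (- B) powr q"
    using powr_add_le_add_powr[of q A "- B"] straddle assms by simp
  finally show ?case
    using straddle V_nonneg[of A q] V_nonneg[of "- B" q] V_minus[of q B] by simp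
next
  case (reflect A B)
  then show ?case
    by (simp add: V_minus add.commute)
qed

lemma V_diff_le_concave:
  fixes q A B :: real
  assumes "0 < q" "q \<le> 1" "B \<le> A"
  shows "V q A - V q B \<le> 2 powr (1 - q) * (A - B) powr q"
  using \<open>B \<le> A\<close>
proof (induct A B rule: ordered_pair_sign_cases)
  case (nonneg A B)
  have "A powr q - B powr q \<le> (A - B) powr q"
    using powr_add_le_add_powr[of q "A - B" B] nonneg assms by simp
  also have "\<dots> \<le> 2 powr (1 - q) * (A - B) powr q"
    using ge_one_powr_ge_zero[of 2 "1 - q"] assms by (simp add: mult_le_cancel_right1)
  finally show ?case
    using nonneg by (simp add: V_nonneg)
next
  case (straddle A B)
  then show ?case
    using add_powr_le_midpoint[of q A "- B"] assms V_nonneg[of A q] V_nonneg[of "- B" q] V_minus[of q B]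
    by simp
next
  case (reflect A B)
  then show ?case
    by (simp add: V_minus add.commute)
qed

lemma V_diff_ge_convex:
  fixes d X Y :: real
  assumes "1 \<le> d" "Y \<le> X"
  shows "2 powr (1 - d) * (\<bar>X\<bar> + \<bar>Y\<bar>) powr (d - 1) * (X - Y) \<le> V d X - V d Y"
  using \<open>Y \<le> X\<close>
proof (induct X Y rule: ordered_pair_sign_cases)
  case (nonneg X Y)
  have "2 powr (1 - d) * (X + Y) powr (d - 1) * (X - Y) = ((X + Y) / 2) powr (d - 1) * (X - Y)"
    by (simp add: powr_divide powr_diff field_simps)
  also have "\<dots> \<le> X powr (d - 1) * (X - Y)"
    using powr_mono2[of "d - 1" "(X + Y) / 2" X] nonneg assms by (intro mult_right_mono) auto
  also have "\<dots> \<le> X powr d - Y powr d"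
    using powr_le_mult_powr[of d Y X] powr_mult_base[of X "d - 1"] nonneg assms
    by (simp add: algebra_simps)
  finally show ?case
    using nonneg by (simp add: V_nonneg)
next
  case (straddle X Y)
  have "2 powr (1 - d) * (X - Y) powr (d - 1) * (X - Y) = 2 powr (1 - d) * (X + - Y) powr d"
    using powr_mult_base[of "X - Y" "d - 1"] straddle by (simp add: mult.commute)
  also have "\<dots> \<le> X powr d + (- Y) powr d"
    using midpoint_le_add_powr[of d X "- Y"] straddle assms by simp
  finally show ?case
    using straddle V_nonneg[of X d] V_nonneg[of "- Y" d] V_minus[of d Y] by simp
next
  case (reflect X Y)
  then show ?case
    by (simp add: V_minus add.commute)
qed

lemma abs_V_diff_ge_concave:
  fixes q A B :: real
  assumes "0 < q" "q \<le> 1"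
  shows "q * (\<bar>A\<bar> + \<bar>B\<bar>) powr (q - 1) * \<bar>A - B\<bar> \<le> \<bar>V q A - V q B\<bar>"
proof (cases "B \<le> A")
  case True
  then show ?thesis
    using V_diff_ge_concave[of q B A] V_mono[of q B A] assms by simp
next
  case False
  then show ?thesis
    using V_diff_ge_concave[of q A B] V_mono[of q A B] assms by (simp add: add.commute)
qed

lemma abs_V_diff_le_concave:
  fixes q A B :: real
  assumes "0 < q" "q \<le> 1"
  shows "\<bar>V q A - V q B\<bar> \<le> 2 powr (1 - q) * \<bar>A - B\<bar> powr q"
proof (cases "B \<le> A")
  case True
  then show ?thesis
    using V_diff_le_concave[of q B A] V_mono[of q B A] assms by simp
next
  case False
  then show ?thesis
    using V_diff_le_concave[of q A B] V_mono[of q A B] assms by (simp add: abs_minus_commute)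
qed

lemma abs_V_diff_ge_convex:
  fixes d X Y :: real
  assumes "1 \<le> d"
  shows "2 powr (1 - d) * (\<bar>X\<bar> + \<bar>Y\<bar>) powr (d - 1) * \<bar>X - Y\<bar> \<le> \<bar>V d X - V d Y\<bar>"
proof (cases "Y \<le> X")
  case True
  then show ?thesis
    using V_diff_ge_convex[of d Y X] V_mono[of d Y X] assms by simp
next
  case False
  then show ?thesis
    using V_diff_ge_convex[of d X Y] V_mono[of d X Y] assms by (simp add: add.commute)
qed

lemma V_diff_mult_V_diff_nonneg:
  assumes "0 < g" "0 < h" "A - B = X - Y"
  shows "0 \<le> (V g A - V g B) * (V h X - V h Y)"
proof (cases "B \<le> A")
  case True
  then show ?thesis
    using V_mono[of g B A] V_mono[of h Y X] assms by simp
next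
  case False
  then show ?thesis
    using V_mono[of g A B] V_mono[of h X Y] assms by (simp add: mult_nonpos_nonpos)
qed

lemma abs_V_add_le:
  assumes "1 \<le> d"
  shows "\<bar>V d X + V d Y\<bar> \<le> (\<bar>X\<bar> + \<bar>Y\<bar>) powr d"
  using abs_triangle_ineq[of "V d X" "V d Y"] add_powr_le_powr_add[of d "\<bar>X\<bar>" "\<bar>Y\<bar>"] assms
  by (simp add: abs_V)

lemma polarized_product_ge:
  fixes D u v E F L U :: real
  assumes "0 \<le> D * (u - v)" "0 \<le> E" "0 \<le> F" "L \<le> \<bar>u - v\<bar>" "\<bar>u + v\<bar> \<le> U"
  shows "\<bar>D\<bar> * (L * (E + F) - U * \<bar>E - F\<bar>) / 2 \<le> D * (u * E - v * F)"
proof -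
  have "\<bar>D\<bar> * L * (E + F) \<le> \<bar>D\<bar> * \<bar>u - v\<bar> * (E + F)"
    using assms by (intro mult_right_mono mult_left_mono) auto
  also have "\<dots> = D * (u - v) * (E + F)"
    using assms(1) by (simp add: abs_mult[symmetric])
  finally have sum_part: "\<bar>D\<bar> * L * (E + F) \<le> D * (u - v) * (E + F)" .
  have "\<bar>D * (u + v) * (E - F)\<bar> \<le> \<bar>D\<bar> * U * \<bar>E - F\<bar>"
    unfolding abs_mult using assms by (intro mult_right_mono mult_left_mono) auto
  then have diff_part: "- (\<bar>D\<bar> * U * \<bar>E - F\<bar>) \<le> D * (u + v) * (E - F)"
    by linarith
  have "\<bar>D\<bar> * (L * (E + F) - U * \<bar>E - F\<bar>) / 2 = (\<bar>D\<bar> * L * (E + F) + - (\<bar>D\<bar> * U * \<bar>E - F\<bar>)) / 2"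
    by (simp add: algebra_simps)
  also have "\<dots> \<le> (D * (u - v) * (E + F) + D * (u + v) * (E - F)) / 2"
    using add_mono[OF sum_part diff_part] by (simp add: divide_right_mono)
  also have "\<dots> = D * (u * E - v * F)"
    by (simp add: field_simps)
  finally show ?thesis .
qed

lemma remainder_factor_le:
  fixes q d S t e f :: real
  assumes "0 \<le> q" "0 \<le> S" "0 \<le> t" "0 \<le> e" "0 \<le> f"
  shows "S powr d * \<bar>e powr (q + 1) - f powr (q + 1)\<bar>
           - S powr (d - 1) * t * (e powr (q + 1) + f powr (q + 1)) / 2 powr d
         \<le> S powr (d - 1) * max e f powr q * ((q + 1) * S * \<bar>e - f\<bar> - max e f / 2 powr d * t)"
proof -
  define m where "m = max e f"
  have "m \<ge> 0"
    using assms by (simp add: m_def)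
  have "S powr d * \<bar>e powr (q + 1) - f powr (q + 1)\<bar>
      = S powr (d - 1) * S * \<bar>e powr (q + 1) - f powr (q + 1)\<bar>"
    using powr_mult_base[of S "d - 1"] assms by (simp add: mult.commute)
  also have "\<dots> \<le> S powr (d - 1) * S * ((q + 1) * m powr q * \<bar>e - f\<bar>)"
    using abs_powr_diff_le[of "q + 1" e f] assms by (intro mult_left_mono) (auto simp: m_def)
  finally have diff: "S powr d * \<bar>e powr (q + 1) - f powr (q + 1)\<bar>
      \<le> S powr (d - 1) * m powr q * ((q + 1) * S * \<bar>e - f\<bar>)"
    by (simp add: ac_simps)
  have "m powr q * m = m powr (q + 1)"
    using powr_mult_base[of m q] \<open>m \<ge> 0\<close> by (simp add: mult.commute add.commute)
  also have "\<dots> \<le> e powr (q + 1) + f powr (q + 1)"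
    by (simp add: m_def max_def)
  finally have "S powr (d - 1) * t * (m powr q * m) / 2 powr d
      \<le> S powr (d - 1) * t * (e powr (q + 1) + f powr (q + 1)) / 2 powr d"
    using assms by (intro divide_right_mono mult_left_mono) auto
  then have sum: "S powr (d - 1) * m powr q * (m / 2 powr d * t)
      \<le> S powr (d - 1) * t * (e powr (q + 1) + f powr (q + 1)) / 2 powr d"
    by (simp add: ac_simps)
  show ?thesis
    using diff sum unfolding m_def[symmetric] right_diff_distrib by linarith
qed

lemma remainder_le:
  fixes q d S t e f M :: real
  assumes q: "0 < q" "q \<le> 1"
    and nonneg: "0 \<le> S" "0 \<le> t" "0 \<le> e" "0 \<le> f" "0 \<le> M" and M: "M \<le> t powr q"
  shows "M * (S powr d * \<bar>e powr (q + 1) - f powr (q + 1)\<bar>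
              - S powr (d - 1) * t * (e powr (q + 1) + f powr (q + 1)) / 2 powr d)
         \<le> (q * 2 powr d) powr q * S powr (q + d) * \<bar>e - f\<bar> powr (q + 1)"
    (is "M * ?R \<le> ?rhs")
proof (cases "?R \<le> 0")
  case True
  then show ?thesis
    using nonneg by (simp add: mult_nonneg_nonpos order_trans[of _ 0])
next
  case False
  define m W where "m = max e f" and "W = \<bar>e - f\<bar>"
  have "S \<noteq> 0" "e \<noteq> f"
    using False nonneg by auto
  then have "S > 0" "W > 0" "m > 0"
    using nonneg by (auto simp: m_def W_def max_def)
  define \<alpha> \<beta> where "\<alpha> = (q + 1) * S * W" and "\<beta> = m / 2 powr d"
  define k where "k = q * \<alpha> / ((q + 1) * \<beta>)"
  have "?R \<le> S powr (d - 1) * m powr q * (\<alpha> - \<beta> * t)"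
    using remainder_factor_le[of q S t e f d] q nonneg by (simp add: m_def W_def \<alpha>_def \<beta>_def)
  then have "M * ?R \<le> t powr q * (S powr (d - 1) * m powr q * (\<alpha> - \<beta> * t))"
    using False M by (intro mult_mono) auto
  also have "\<dots> = S powr (d - 1) * m powr q * (t powr q * (\<alpha> - \<beta> * t))"
    by (simp only: ac_simps)
  also have "\<dots> \<le> S powr (d - 1) * m powr q * (k powr q * \<alpha> / (q + 1))"
    using powr_mult_linear_le[of q \<alpha> \<beta> t] q nonneg \<open>S > 0\<close> \<open>W > 0\<close> \<open>m > 0\<close>
    by (intro mult_left_mono) (auto simp: \<alpha>_def \<beta>_def k_def)
  also have "\<dots> = (q * 2 powr d) powr q * (S powr (d - 1) * S powr q * S) * (W powr q * W)"
  proof -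
    have "m powr q * k powr q = (q * 2 powr d * S * W) powr q"
      using \<open>m > 0\<close> q by (simp add: k_def \<alpha>_def \<beta>_def powr_mult[symmetric] mult_ac)
    also have "\<dots> = (q * 2 powr d) powr q * S powr q * W powr q"
      using q \<open>S > 0\<close> \<open>W > 0\<close> by (simp add: powr_mult)
    finally have mk: "m powr q * k powr q = \<dots>" .
    have \<alpha>: "\<alpha> / (q + 1) = S * W"
      using q by (simp add: \<alpha>_def)
    have "S powr (d - 1) * m powr q * (k powr q * \<alpha> / (q + 1))
        = S powr (d - 1) * (m powr q * k powr q) * (\<alpha> / (q + 1))"
      by (simp only: times_divide_eq_right mult.assoc)
    then show ?thesis
      unfolding mk \<alpha> by (simp only: ac_simps)
  qed
  also have "\<dots> = ?rhs"
    using powr_mult_base[of S "q + (d - 1)"] powr_mult_base[of W q] \<open>S > 0\<close> \<open>W > 0\<close>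
    by (simp add: W_def powr_add[symmetric] algebra_simps)
  finally show ?thesis .
qed

lemma product_ge_main_term_minus_remainder:
  fixes q d T S t e f D u v :: real
  assumes q: "0 < q" "q \<le> 1" and d: "1 \<le> d"
    and nonneg: "0 \<le> S" "0 \<le> t" "0 \<le> e" "0 \<le> f"
    and sign: "0 \<le> D * (u - v)"
    and D_lower: "q * T powr (q - 1) * t \<le> \<bar>D\<bar>" and D_upper: "\<bar>D\<bar> \<le> 2 powr (1 - q) * t powr q"
    and uv_lower: "2 powr (1 - d) * S powr (d - 1) * t \<le> \<bar>u - v\<bar>" and uv_upper: "\<bar>u + v\<bar> \<le> S powr d"
  shows "q / 2 powr (d + 1) * T powr (q - 1) * S powr (d - 1) * t\<^sup>2 * (e powr (q + 1) + f powr (q + 1))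
         - (2 powr (d + 1) / q) powr q * S powr (q + d) * \<bar>e - f\<bar> powr (q + 1)
         \<le> D * (u * e powr (q + 1) - v * f powr (q + 1))"
proof -
  define E F where "E = e powr (q + 1)" and "F = f powr (q + 1)"
  define L where "L = 2 powr (1 - d) * S powr (d - 1) * t"
  define K where "K = S powr (d - 1) * t * (E + F) / 2 powr d"
  have "0 \<le> E" "0 \<le> F"
    by (simp_all add: E_def F_def)
  have two: "2 powr (1 - d) = 2 / 2 powr d"
    by (simp add: powr_diff)
  have "\<bar>D\<bar> * (L * (E + F) - S powr d * \<bar>E - F\<bar>) / 2 \<le> D * (u * E - v * F)"
    using polarized_product_ge[OF sign \<open>0 \<le> E\<close> \<open>0 \<le> F\<close> uv_lower uv_upper] by (simp add: L_def)
  moreover have "\<bar>D\<bar> * (L * (E + F) - S powr d * \<bar>E - F\<bar>) / 2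
      = \<bar>D\<bar> * (L * (E + F) / 4) - \<bar>D\<bar> / 2 * (S powr d * \<bar>E - F\<bar> - K)"
    unfolding L_def K_def two by (simp add: field_simps)
  moreover have "q / 2 powr (d + 1) * T powr (q - 1) * S powr (d - 1) * t\<^sup>2 * (E + F)
      \<le> \<bar>D\<bar> * (L * (E + F) / 4)"
  proof -
    have "q / 2 powr (d + 1) * T powr (q - 1) * S powr (d - 1) * t\<^sup>2 * (E + F)
        = (q * T powr (q - 1) * t) * (L * (E + F) / 4)"
      unfolding L_def two by (simp add: powr_add field_simps power2_eq_square)
    also have "\<dots> \<le> \<bar>D\<bar> * (L * (E + F) / 4)"
      using D_lower nonneg \<open>0 \<le> E\<close> \<open>0 \<le> F\<close> by (intro mult_right_mono) (auto simp: L_def)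
    finally show ?thesis .
  qed
  moreover have "\<bar>D\<bar> / 2 * (S powr d * \<bar>E - F\<bar> - K)
      \<le> (2 powr (d + 1) / q) powr q * S powr (q + d) * \<bar>e - f\<bar> powr (q + 1)"
  proof -
    have "2 powr (1 - q) \<le> 2"
      using powr_mono[of "1 - q" 1 2] q by simp
    then have "\<bar>D\<bar> / 2 \<le> t powr q"
      using D_upper mult_right_mono[of "2 powr (1 - q)" 2 "t powr q"] by simp
    then have "\<bar>D\<bar> / 2 * (S powr d * \<bar>E - F\<bar> - K)
        \<le> (q * 2 powr d) powr q * S powr (q + d) * \<bar>e - f\<bar> powr (q + 1)"
      using remainder_le[of q S t e f "\<bar>D\<bar> / 2" d] q nonneg by (simp add: E_def F_def K_def)
    also have "\<dots> \<le> (2 powr (d + 1) / q) powr q * S powr (q + d) * \<bar>e - f\<bar> powr (q + 1)"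
    proof (intro mult_right_mono powr_mono2)
      have "q * 2 powr d \<le> 2 powr d" "2 powr d \<le> 2 powr (d + 1) / q"
        using q by (simp_all add: powr_add field_simps mult_le_cancel_right1)
      then show "q * 2 powr d \<le> 2 powr (d + 1) / q"
        by linarith
    qed (use q in auto)
    finally show ?thesis .
  qed
  ultimately show ?thesis
    unfolding E_def F_def by linarith
qed

theorem lemma2p2:
  fixes p \<delta> a b c d e f :: real
  assumes "1 < p" "p \<le> 2" "\<delta> \<ge> 1" "e \<ge> 0" "f \<ge> 0"
  shows "(V (p - 1) (a - b) - V (p - 1) (c - d)) * (V \<delta> (a - c) * e powr p - V \<delta> (b - d) * f powr p)
    \<ge> (p - 1) / 2 powr (\<delta> + 1) * (\<bar>a - b\<bar> + \<bar>c - d\<bar>) powr (p - 2)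
        * (\<bar>a - c\<bar> + \<bar>b - d\<bar>) powr (\<delta> - 1) * \<bar>(a - c) - (b - d)\<bar>^2 * (e powr p + f powr p)
      - (2 powr (\<delta> + 1) / (p - 1)) powr (p - 1) * (\<bar>a - c\<bar> + \<bar>b - d\<bar>) powr (p + \<delta> - 1) * \<bar>e - f\<bar> powr p"
proof -
  have q: "0 < p - 1" "p - 1 \<le> 1"
    using assms by auto
  have h: "(a - b) - (c - d) = (a - c) - (b - d)"
    by simp
  have exponents: "p - 1 + 1 = p" "p - 1 - 1 = p - 2" "p - 1 + \<delta> = p + \<delta> - 1"
    by simp_all
  show ?thesis
    using product_ge_main_term_minus_remainder[OF q \<open>\<delta> \<ge> 1\<close> _ _ \<open>e \<ge> 0\<close> \<open>f \<ge> 0\<close>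
        V_diff_mult_V_diff_nonneg[of "p - 1" \<delta>, OF q(1) _ h]
        abs_V_diff_ge_concave[OF q, of "a - b" "c - d", unfolded h]
        abs_V_diff_le_concave[OF q, of "a - b" "c - d", unfolded h]
        abs_V_diff_ge_convex[OF \<open>\<delta> \<ge> 1\<close>, of "a - c" "b - d"]
        abs_V_add_le[OF \<open>\<delta> \<ge> 1\<close>, of "a - c" "b - d"]]
      assms unfolding exponents by simp
qed

end
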